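(* Let $K$ be a finite simplicial complex, $N\subseteq K$ a closed set, and for $i=1,\dots,n$ let $\mathcal{V}_i$ be a multivector field on $K$, $\mathcal{M}_i$ a Morse decomposition (under $\mathcal{V}_i$) of an isolated invariant set $S_i$ isolated by $N$, and $G_i$ the corresponding Conley-Morse graph. Suppose each Morse set $M\in\mathcal{M}_i$ is associated with a unique index pair $(P_M,E_M)$ in $N$ for $M$. Then the algorithm described below (Algorithm FindConleyMorseFiltrations) outputs exactly the set of all Conley-Morse filtrations for $G_1,\dots,G_n$.
   Context: Notation: $\sigma\le\tau$ means $\sigma$ is a face of $\tau$; $\mathrm{cl}(A)=\{\tau:\tau\le\sigma \text{ for some }\sigma\in A\}$; $A$ is closed if $A=\mathrm{cl}(A)$; $\mathrm{mo}(A)=\mathrm{cl}(A)\setminus A$. A multivector is a convex set $A\subseteq K$ (no $\sigma\in K\setminus A$ with $\sigma_1\le\sigma\le\sigma_2$ for $\sigma_1,\sigma_2\in A$); a multivector field $\mathcal{V}$ is a partition of $K$ into multivectors, $[\sigma]_{\mathcal V}$ the multivector containing $\sigma$, and $F_{\mathcal V}(\sigma)=[\sigma]_{\mathcal V}\cup\mathrm{cl}(\sigma)$, $F_{\mathcal V}(A)=\bigcup_{\sigma\in A}F_{\mathcal V}(\sigma)$. A path is a finite sequence $\sigma_1,\dots,\sigma_m$ with $\sigma_{j}\in F_{\mathcal V}(\sigma_{j-1})$; a solution is a bi-infinite such sequence. A multivector $V$ is critical if $H_k(\mathrm{cl}(V),\mathrm{mo}(V))\ne 0$ for some $k$ (homology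 over a finite field), regular otherwise. A solution $\rho:\mathbb Z\to K$ is essential if for each $i$ with $[\rho(i)]_{\mathcal V}$ regular there are $i^-<i<i^+$ with $[\rho(i^\pm)]_{\mathcal V}\ne[\rho(i)]_{\mathcal V}$. $\mathrm{inv}_{\mathcal V}(A)$ is the set of $\sigma\in A$ lying on an essential solution with image in $A$. $S$ is invariant if $\mathrm{inv}(S)=S$. An invariant set $S$ is isolated by a closed set $N$ if $S$ is a union of multivectors of $\mathcal V$ and every path in $N$ with both endpoints in $S$ lies in $S$. A Morse decomposition of $S$ (indexed by a finite poset $\mathbb P$) is a family $\{M_p\}_{p\in\mathbb P}$ of mutually disjoint isolated invariant subsets of $S$ such that every essential solution $\rho$ in $S$ either has image in some $M_r$ or has $\alpha(\rho)\subseteq M_q$, $\omega(\rho)\subseteq M_p$ with $q>p$, where $\alpha(\rho)=\bigcap_{i\ge1}\rho((-\infty,-i])$, $\omega(\rho)=\bigcap_{i\ge1}\rho([i,\infty))$. The Conley-Morse graph has one vertex per Morse set, a directed edge $M\to M'$ iff there is a connection (a path in $N$ starting in $M$ and ending in $M'$), and vertices annotated by Poincaré polynomials of the Conley indices. An index pair in $N$ for $S$ (isolated by $N$) is a pair of closed sets $E\subseteq P\subseteq N$ with: $F_{\mathcal V}(E)\cap N\subseteq E$; $F_{\mathcal V}(P)\cap N\subseteq P$; $F_{\mathcal V}(P\setminus E)\subseteq N$; $S=\mathrm{inv}(P\setminus E)$. A sequence $\{(P_i,E_i)\}_{i=a}^b$, where $(P_i,E_i)$ is the index pair of some Morse set in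 $\mathcal M_i$, is feasible if $(P_i\setminus E_i)\cap(P_{i+1}\setminus E_{i+1})\ne\emptyset$ for $a\le i<b$; it is maximal if moreover there is no index pair $(P_{a-1},E_{a-1})$ of a Morse set in $\mathcal M_{a-1}$ with $(P_{a-1}\setminus E_{a-1})\cap(P_a\setminus E_a)\neq\emptyset$ and no index pair $(P_{b+1},E_{b+1})$ of a Morse set in $\mathcal M_{b+1}$ with $(P_b\setminus E_b)\cap(P_{b+1}\setminus E_{b+1})\ne\emptyset$. The Conley-Morse filtration of a maximal sequence is the relative zigzag filtration $(P_a,E_a)\supseteq(P_a\cap P_{a+1},E_a\cap E_{a+1})\subseteq(P_{a+1},E_{a+1})\supseteq\cdots\subseteq(P_b,E_b)$. Algorithm FindConleyMorseFiltrations: initialize sets $alive=\emptyset$, $all=\emptyset$. For $i=1,\dots,n$: set $to\_remove=\emptyset$, $still\_alive=\emptyset$; for each sequence $s\in alive$ with last term $(P',E')$ and each $M\in\mathcal M_i$ with $(P,E)=(P_M,E_M)$ satisfying $(P\setminus E)\cap(P'\setminus E')\ne\emptyset$: add to $still\_alive$ a copy of $s$ with $(P,E)$ appended, mark $M$ as "in a sequence", and add $s$ to $to\_remove$. Then let $dead=alive\setminus to\_remove$, set $alive=still\_alive$, $all=all\cup dead$, and for each $M\in\mathcal M_i$ not marked "in a sequence" add the one-term sequence $((P_M,E_M))$ to $alive$. After the loop set $all=all\cup alive$ and output the relative zigzag filtrations of the sequences in $all$. *)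

theory Defs
  imports Main
begin

definition simplicial_complex :: "'v set set \<Rightarrow> bool" where
  "simplicial_complex K \<longleftrightarrow> finite K \<and> (\<forall>\<sigma>\<in>K. finite \<sigma> \<and> \<sigma> \<noteq> {}) \<and>
     (\<forall>\<sigma>\<in>K. \<forall>\<tau>. \<tau> \<subseteq> \<sigma> \<and> \<tau> \<noteq> {} \<longrightarrow> \<tau> \<in> K)"

definition cl :: "'v set set \<Rightarrow> 'v set set \<Rightarrow> 'v set set" where
  "cl K A = {\<tau>\<in>K. \<exists>\<sigma>\<in>A. \<tau> \<subseteq> \<sigma>}"

definition closed_set :: "'v set set \<Rightarrow> 'v set set \<Rightarrow> bool" where
  "closed_set K A \<longleftrightarrow> A \<subseteq> K \<and> cl K A = A"

definition mo :: "'v set set \<Rightarrow> 'v set set \<Rightarrow> 'v set set" where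
  "mo K A = cl K A - A"

definition convex_set :: "'v set set \<Rightarrow> 'v set set \<Rightarrow> bool" where
  "convex_set K A \<longleftrightarrow> A \<subseteq> K \<and>
     (\<forall>\<sigma>\<in>K. \<forall>\<sigma>1\<in>A. \<forall>\<sigma>2\<in>A. \<sigma>1 \<subseteq> \<sigma> \<and> \<sigma> \<subseteq> \<sigma>2 \<longrightarrow> \<sigma> \<in> A)"

definition multivector_field :: "'v set set \<Rightarrow> 'v set set set \<Rightarrow> bool" where
  "multivector_field K V \<longleftrightarrow> (\<forall>A\<in>V. A \<noteq> {} \<and> convex_set K A) \<and> \<Union>V = K \<and>
     (\<forall>A\<in>V. \<forall>B\<in>V. A \<noteq> B \<longrightarrow> A \<inter> B = {})"

definition mv_of :: "'v set set set \<Rightarrow> 'v set \<Rightarrow> 'v set set" where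
  "mv_of V \<sigma> = (THE A. A \<in> V \<and> \<sigma> \<in> A)"

definition Fv :: "'v set set \<Rightarrow> 'v set set set \<Rightarrow> 'v set \<Rightarrow> 'v set set" where
  "Fv K V \<sigma> = mv_of V \<sigma> \<union> cl K {\<sigma>}"

definition FvS :: "'v set set \<Rightarrow> 'v set set set \<Rightarrow> 'v set set \<Rightarrow> 'v set set" where
  "FvS K V A = (\<Union>\<sigma>\<in>A. Fv K V \<sigma>)"

definition is_path :: "'v set set \<Rightarrow> 'v set set set \<Rightarrow> 'v set list \<Rightarrow> bool" where
  "is_path K V xs \<longleftrightarrow> xs \<noteq> [] \<and> set xs \<subseteq> K \<and>
     (\<forall>j. Suc j < length xs \<longrightarrow> xs ! Suc j \<in> Fv K V (xs ! j))"

definition is_solution :: "'v set set \<Rightarrow> 'v set set set \<Rightarrow> (int \<Rightarrow> 'v set) \<Rightarrow> bool" where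
  "is_solution K V \<rho> \<longleftrightarrow> (\<forall>i. \<rho> i \<in> K \<and> \<rho> (i + 1) \<in> Fv K V (\<rho> i))"

text \<open>For a convex set \<open>A\<close> the relative chain complex \<open>C(cl A)/C(mo A)\<close> is
  canonically the complex of chains supported on \<open>cl A - mo A = A\<close>, with the boundary
  projected onto \<open>A\<close>. Oriented simplices use the vertex order: the boundary of
  \<open>[v_0<\<dots><v_k]\<close> is \<open>\<Sum>(-1)^i [\<dots>, v_i omitted, \<dots>]\<close>.\<close>

definition rel_chains :: "'v set set \<Rightarrow> nat \<Rightarrow> ('v set \<Rightarrow> 'f::field) set" where
  "rel_chains A k = {c. \<forall>\<sigma>. c \<sigma> \<noteq> 0 \<longrightarrow> \<sigma> \<in> A \<and> card \<sigma> = Suc k}"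

definition rel_bd :: "'v::linorder set set \<Rightarrow> ('v set \<Rightarrow> 'f::field) \<Rightarrow> 'v set \<Rightarrow> 'f" where
  "rel_bd A c \<tau> = (if \<tau> \<in> A then
      (\<Sum>\<sigma>\<in>{\<sigma>\<in>A. \<tau> \<subseteq> \<sigma> \<and> card \<sigma> = Suc (card \<tau>)}.
          (-1) ^ card {w\<in>\<sigma>. w < the_elem (\<sigma> - \<tau>)} * c \<sigma>)
    else 0)"

definition rel_homology_nonzero :: "'f::field itself \<Rightarrow> 'v::linorder set set \<Rightarrow> nat \<Rightarrow> bool" where
  "rel_homology_nonzero F A k \<longleftrightarrow>
     (\<exists>z::'v set \<Rightarrow> 'f. z \<in> rel_chains A k \<and> rel_bd A z = (\<lambda>_. 0) \<and>
        \<not> (\<exists>b::'v set \<Rightarrow> 'f. b \<in> rel_chains A (Suc k) \<and> rel_bd A b = z))"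

definition critical :: "'f::field itself \<Rightarrow> 'v::linorder set set \<Rightarrow> bool" where
  "critical F A \<longleftrightarrow> (\<exists>k. rel_homology_nonzero F A k)"

definition essential_solution ::
  "'f::field itself \<Rightarrow> 'v::linorder set set \<Rightarrow> 'v set set set \<Rightarrow> (int \<Rightarrow> 'v set) \<Rightarrow> bool" where
  "essential_solution F K V \<rho> \<longleftrightarrow> is_solution K V \<rho> \<and>
     (\<forall>i. \<not> critical F (mv_of V (\<rho> i)) \<longrightarrow>
        (\<exists>i'<i. mv_of V (\<rho> i') \<noteq> mv_of V (\<rho> i)) \<and>
        (\<exists>i'>i. mv_of V (\<rho> i') \<noteq> mv_of V (\<rho> i)))"

definition inv_set ::
  "'f::field itself \<Rightarrow> 'v::linorder set set \<Rightarrow> 'v set set set \<Rightarrow> 'v set set \<Rightarrow> 'v set set" where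
  "inv_set F K V A = {\<sigma>\<in>A. \<exists>\<rho>. essential_solution F K V \<rho> \<and> range \<rho> \<subseteq> A \<and> \<sigma> \<in> range \<rho>}"

definition invariant ::
  "'f::field itself \<Rightarrow> 'v::linorder set set \<Rightarrow> 'v set set set \<Rightarrow> 'v set set \<Rightarrow> bool" where
  "invariant F K V S \<longleftrightarrow> inv_set F K V S = S"

definition isolated_by ::
  "'f::field itself \<Rightarrow> 'v::linorder set set \<Rightarrow> 'v set set set \<Rightarrow> 'v set set \<Rightarrow> 'v set set \<Rightarrow> bool" where
  "isolated_by F K V N S \<longleftrightarrow> closed_set K N \<and> S \<subseteq> N \<and> invariant F K V S \<and>
     (\<exists>W\<subseteq>V. S = \<Union>W) \<and>
     (\<forall>xs. is_path K V xs \<and> set xs \<subseteq> N \<and> hd xs \<in> S \<and> last xs \<in> S \<longrightarrow> set xs \<subseteq> S)"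

definition alpha_limit :: "(int \<Rightarrow> 'v set) \<Rightarrow> 'v set set" where
  "alpha_limit \<rho> = (\<Inter>i\<in>{1..}. \<rho> ` {..-i})"

definition omega_limit :: "(int \<Rightarrow> 'v set) \<Rightarrow> 'v set set" where
  "omega_limit \<rho> = (\<Inter>i\<in>{1..}. \<rho> ` {i..})"

definition morse_decomposition ::
  "'f::field itself \<Rightarrow> 'v::linorder set set \<Rightarrow> 'v set set set \<Rightarrow> 'v set set \<Rightarrow> 'v set set \<Rightarrow>
   'p set \<Rightarrow> ('p \<Rightarrow> 'p \<Rightarrow> bool) \<Rightarrow> ('p \<Rightarrow> 'v set set) \<Rightarrow> bool" where
  "morse_decomposition F K V N S P le M \<longleftrightarrow> finite P \<and>
     (\<forall>p\<in>P. le p p) \<and> (\<forall>p\<in>P. \<forall>q\<in>P. le p q \<and> le q p \<longrightarrow> p = q) \<and>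
     (\<forall>p\<in>P. \<forall>q\<in>P. \<forall>r\<in>P. le p q \<and> le q r \<longrightarrow> le p r) \<and>
     (\<forall>p\<in>P. M p \<subseteq> S \<and> isolated_by F K V N (M p)) \<and>
     (\<forall>p\<in>P. \<forall>q\<in>P. p \<noteq> q \<longrightarrow> M p \<inter> M q = {}) \<and>
     (\<forall>\<rho>. essential_solution F K V \<rho> \<and> range \<rho> \<subseteq> S \<longrightarrow>
        (\<exists>r\<in>P. range \<rho> \<subseteq> M r) \<or>
        (\<exists>p\<in>P. \<exists>q\<in>P. le p q \<and> p \<noteq> q \<and> alpha_limit \<rho> \<subseteq> M q \<and> omega_limit \<rho> \<subseteq> M p))"

definition index_pair ::
  "'f::field itself \<Rightarrow> 'v::linorder set set \<Rightarrow> 'v set set set \<Rightarrow> 'v set set \<Rightarrow> 'v set set \<Rightarrow>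
   'v set set \<Rightarrow> 'v set set \<Rightarrow> bool" where
  "index_pair F K V N S P E \<longleftrightarrow> closed_set K P \<and> closed_set K E \<and> E \<subseteq> P \<and> P \<subseteq> N \<and>
     FvS K V E \<inter> N \<subseteq> E \<and> FvS K V P \<inter> N \<subseteq> P \<and> FvS K V (P - E) \<subseteq> N \<and>
     S = inv_set F K V (P - E)"

type_synonym 'v ipair = "'v set set \<times> 'v set set"

definition linked :: "'v ipair \<Rightarrow> 'v ipair \<Rightarrow> bool" where
  "linked x y \<longleftrightarrow> (fst x - snd x) \<inter> (fst y - snd y) \<noteq> {}"

text \<open>\<open>ip i p\<close> is the index pair associated with the Morse set \<open>M_p\<close> of \<open>\<M>_i\<close>;
  \<open>Pi i\<close> indexes \<open>\<M>_i\<close>. A sequence \<open>{(P_j,E_j)}_{j=a}^{b}\<close> is given by its start \<open>a\<close>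
  and the list of its terms.\<close>
definition maximal_sequence ::
  "nat \<Rightarrow> (nat \<Rightarrow> 'p set) \<Rightarrow> (nat \<Rightarrow> 'p \<Rightarrow> 'v ipair) \<Rightarrow> nat \<Rightarrow> 'v ipair list \<Rightarrow> bool" where
  "maximal_sequence n Pi ip a xs \<longleftrightarrow> xs \<noteq> [] \<and> 1 \<le> a \<and> a + length xs - 1 \<le> n \<and>
     (\<forall>j<length xs. \<exists>p\<in>Pi (a + j). xs ! j = ip (a + j) p) \<and>
     (\<forall>j. Suc j < length xs \<longrightarrow> linked (xs ! j) (xs ! Suc j)) \<and>
     \<not> (1 < a \<and> (\<exists>p\<in>Pi (a - 1). linked (ip (a - 1) p) (hd xs))) \<and>
     \<not> (a + length xs - 1 < n \<and> (\<exists>p\<in>Pi (a + length xs). linked (last xs) (ip (a + length xs) p)))"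

text \<open>Relative zigzag filtration
  \<open>(P_a,E_a) \<supseteq> (P_a\<inter>P_{a+1},E_a\<inter>E_{a+1}) \<subseteq> (P_{a+1},E_{a+1}) \<supseteq> \<dots>\<close>,
  recorded as the list of its pairs (the inclusions are determined).\<close>
fun zigzag :: "'v ipair list \<Rightarrow> 'v ipair list" where
  "zigzag [] = []"
| "zigzag [x] = [x]"
| "zigzag (x # y # r) = x # (fst x \<inter> fst y, snd x \<inter> snd y) # zigzag (y # r)"

definition conley_morse_filtrations ::
  "nat \<Rightarrow> (nat \<Rightarrow> 'p set) \<Rightarrow> (nat \<Rightarrow> 'p \<Rightarrow> 'v ipair) \<Rightarrow> 'v ipair list set" where
  "conley_morse_filtrations n Pi ip =
     {zigzag xs | a xs. maximal_sequence n Pi ip a xs}"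

definition alg_step ::
  "(nat \<Rightarrow> 'p set) \<Rightarrow> (nat \<Rightarrow> 'p \<Rightarrow> 'v ipair) \<Rightarrow> nat \<Rightarrow>
   'v ipair list set \<times> 'v ipair list set \<Rightarrow> 'v ipair list set \<times> 'v ipair list set" where
  "alg_step Pi ip i st = (let alive = fst st; all = snd st;
      still_alive = {s @ [ip i p] | s p. s \<in> alive \<and> p \<in> Pi i \<and> linked (last s) (ip i p)};
      to_remove = {s\<in>alive. \<exists>p\<in>Pi i. linked (last s) (ip i p)};
      marked = {p\<in>Pi i. \<exists>s\<in>alive. linked (last s) (ip i p)};
      dead = alive - to_remove
    in (still_alive \<union> {[ip i p] | p. p \<in> Pi i \<and> p \<notin> marked}, all \<union> dead))"

fun alg_state ::
  "(nat \<Rightarrow> 'p set) \<Rightarrow> (nat \<Rightarrow> 'p \<Rightarrow> 'v ipair) \<Rightarrow> nat \<Rightarrow> 'v ipair list set \<times> 'v ipair list set" where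
  "alg_state Pi ip 0 = ({}, {})"
| "alg_state Pi ip (Suc i) = alg_step Pi ip (Suc i) (alg_state Pi ip i)"

definition find_conley_morse_filtrations ::
  "nat \<Rightarrow> (nat \<Rightarrow> 'p set) \<Rightarrow> (nat \<Rightarrow> 'p \<Rightarrow> 'v ipair) \<Rightarrow> 'v ipair list set" where
  "find_conley_morse_filtrations n Pi ip =
     zigzag ` (snd (alg_state Pi ip n) \<union> fst (alg_state Pi ip n))"

end

theory Submission
  imports Defs
begin

text \<open>After iteration \<open>i\<close>, \<open>alive\<close> is
  exactly the set of feasible sequences that end in \<open>\<M>_i\<close> and cannot be extended to the
  left, and \<open>all\<close> collects those sequences that, in addition, could not be extended to the
  right at some earlier stage. At the end, \<open>all \<union> alive\<close> is therefore the set of maximal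
  sequences.\<close>

definition feasible_seq ::
  "(nat \<Rightarrow> 'p set) \<Rightarrow> (nat \<Rightarrow> 'p \<Rightarrow> 'v ipair) \<Rightarrow> nat \<Rightarrow> 'v ipair list \<Rightarrow> bool" where
  "feasible_seq Pi ip a xs \<longleftrightarrow> (\<forall>j<length xs. \<exists>p\<in>Pi (a + j). xs ! j = ip (a + j) p) \<and>
     (\<forall>j. Suc j < length xs \<longrightarrow> linked (xs ! j) (xs ! Suc j))"

definition left_maximal ::
  "(nat \<Rightarrow> 'p set) \<Rightarrow> (nat \<Rightarrow> 'p \<Rightarrow> 'v ipair) \<Rightarrow> nat \<Rightarrow> 'v ipair list \<Rightarrow> bool" where
  "left_maximal Pi ip a xs \<longleftrightarrow> \<not> (1 < a \<and> (\<exists>p\<in>Pi (a - 1). linked (ip (a - 1) p) (hd xs)))"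

text \<open>Sequences are anchored at the stage \<open>i\<close> of their last term; they start at stage
  \<open>i + 1 - length xs\<close>.\<close>
definition left_maximal_ending_at ::
  "(nat \<Rightarrow> 'p set) \<Rightarrow> (nat \<Rightarrow> 'p \<Rightarrow> 'v ipair) \<Rightarrow> nat \<Rightarrow> 'v ipair list \<Rightarrow> bool" where
  "left_maximal_ending_at Pi ip i xs \<longleftrightarrow> xs \<noteq> [] \<and> length xs \<le> i \<and>
     feasible_seq Pi ip (Suc i - length xs) xs \<and> left_maximal Pi ip (Suc i - length xs) xs"

lemma feasible_seq_snoc:
  "feasible_seq Pi ip a (xs @ [x]) \<longleftrightarrow> feasible_seq Pi ip a xs \<and>
     (\<exists>p\<in>Pi (a + length xs). x = ip (a + length xs) p) \<and> (xs \<noteq> [] \<longrightarrow> linked (last xs) x)"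
proof -
  have terms: "(\<forall>j<length (xs @ [x]). \<exists>p\<in>Pi (a + j). (xs @ [x]) ! j = ip (a + j) p) \<longleftrightarrow>
      (\<forall>j<length xs. \<exists>p\<in>Pi (a + j). xs ! j = ip (a + j) p) \<and>
      (\<exists>p\<in>Pi (a + length xs). x = ip (a + length xs) p)"
    by (auto simp: nth_append less_Suc_eq)
  have links: "(\<forall>j. Suc j < length (xs @ [x]) \<longrightarrow> linked ((xs @ [x]) ! j) ((xs @ [x]) ! Suc j)) \<longleftrightarrow>
      (\<forall>j. Suc j < length xs \<longrightarrow> linked (xs ! j) (xs ! Suc j)) \<and> (xs \<noteq> [] \<longrightarrow> linked (last xs) x)"
  proof
    assume links: "\<forall>j. Suc j < length (xs @ [x]) \<longrightarrow> linked ((xs @ [x]) ! j) ((xs @ [x]) ! Suc j)"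
    show "(\<forall>j. Suc j < length xs \<longrightarrow> linked (xs ! j) (xs ! Suc j)) \<and>
        (xs \<noteq> [] \<longrightarrow> linked (last xs) x)"
    proof (intro conjI allI impI)
      fix j
      assume "Suc j < length xs"
      then show "linked (xs ! j) (xs ! Suc j)"
        using links[rule_format, of j] by (simp add: nth_append)
    next
      assume "xs \<noteq> []"
      then show "linked (last xs) x"
        using links[rule_format, of "length xs - 1"] by (simp add: nth_append last_conv_nth)
    qed
  next
    assume links: "(\<forall>j. Suc j < length xs \<longrightarrow> linked (xs ! j) (xs ! Suc j)) \<and>
        (xs \<noteq> [] \<longrightarrow> linked (last xs) x)"
    show "\<forall>j. Suc j < length (xs @ [x]) \<longrightarrow> linked ((xs @ [x]) ! j) ((xs @ [x]) ! Suc j)"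
    proof (intro allI impI)
      fix j
      assume "Suc j < length (xs @ [x])"
      then consider "Suc j < length xs" | "Suc j = length xs"
        by fastforce
      then show "linked ((xs @ [x]) ! j) ((xs @ [x]) ! Suc j)"
      proof cases
        case 1
        then show ?thesis
          using links by (simp add: nth_append)
      next
        case 2
        then have "j = length xs - 1" and "xs \<noteq> []"
          by auto
        then show ?thesis
          using links by (simp add: nth_append last_conv_nth)
      qed
    qed
  qed
  show ?thesis
    unfolding feasible_seq_def terms links by blast
qed

lemma feasible_seq_singleton: "feasible_seq Pi ip a [x] \<longleftrightarrow> (\<exists>p\<in>Pi a. x = ip a p)"
  using feasible_seq_snoc[of Pi ip a "[]" x] by (simp add: feasible_seq_def)

lemma left_maximal_ending_at_last:
  assumes "left_maximal_ending_at Pi ip i xs"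
  shows "1 \<le> i" and "\<exists>p\<in>Pi i. last xs = ip i p"
proof -
  have ne: "xs \<noteq> []" and len: "length xs \<le> i" and feas: "feasible_seq Pi ip (Suc i - length xs) xs"
    using assms unfolding left_maximal_ending_at_def by auto
  then show "1 \<le> i"
    by (cases xs) auto
  have "Suc i - length xs + (length xs - 1) = i" and "length xs - 1 < length xs"
    using ne len by (cases xs; auto)+
  then show "\<exists>p\<in>Pi i. last xs = ip i p"
    using feas ne unfolding feasible_seq_def by (metis last_conv_nth)
qed

lemma left_maximal_ending_at_snoc:
  assumes "xs \<noteq> []"
  shows "left_maximal_ending_at Pi ip (Suc i) (xs @ [x]) \<longleftrightarrow> left_maximal_ending_at Pi ip i xs \<and>
    (\<exists>p\<in>Pi (Suc i). x = ip (Suc i) p) \<and> linked (last xs) x"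
proof -
  have start: "Suc (Suc i) - length (xs @ [x]) = Suc i - length xs"
    by simp
  have "Suc i - length xs + length xs = Suc i" if "length xs \<le> i"
    using that by simp
  moreover have "hd (xs @ [x]) = hd xs"
    using assms by simp
  ultimately show ?thesis
    unfolding left_maximal_ending_at_def start feasible_seq_snoc left_maximal_def
    using assms by auto
qed

lemma ex_left_maximal_ending_at_with_last:
  "1 \<le> i \<Longrightarrow> p \<in> Pi i \<Longrightarrow> \<exists>xs. left_maximal_ending_at Pi ip i xs \<and> last xs = ip i p"
proof (induction i arbitrary: p)
  case 0
  then show ?case by simp
next
  case (Suc i)
  show ?case
  proof (cases "1 \<le> i \<and> (\<exists>q\<in>Pi i. linked (ip i q) (ip (Suc i) p))")
    case True
    then obtain q where "1 \<le> i" "q \<in> Pi i" and link: "linked (ip i q) (ip (Suc i) p)"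
      by blast
    then obtain xs where xs: "left_maximal_ending_at Pi ip i xs" "last xs = ip i q"
      using Suc.IH by blast
    then have "xs \<noteq> []"
      by (simp add: left_maximal_ending_at_def)
    then have "left_maximal_ending_at Pi ip (Suc i) (xs @ [ip (Suc i) p])"
      using left_maximal_ending_at_snoc[of xs Pi ip i "ip (Suc i) p"] xs link \<open>p \<in> Pi (Suc i)\<close>
      by auto
    then show ?thesis
      by auto
  next
    case False
    then have "left_maximal_ending_at Pi ip (Suc i) [ip (Suc i) p]"
      using Suc.prems unfolding left_maximal_ending_at_def left_maximal_def feasible_seq_singleton
      by auto
    then show ?thesis
      by auto
  qed
qed

text \<open>This is what the marking in the algorithm computes.\<close>
lemma left_maximal_ending_at_singleton:
  "left_maximal_ending_at Pi ip (Suc i) [x] \<longleftrightarrow> (\<exists>p\<in>Pi (Suc i). x = ip (Suc i) p) \<and>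
     \<not> (\<exists>xs. left_maximal_ending_at Pi ip i xs \<and> linked (last xs) x)"
proof -
  have "(\<exists>q\<in>Pi i. 1 \<le> i \<and> linked (ip i q) x) \<longleftrightarrow>
      (\<exists>xs. left_maximal_ending_at Pi ip i xs \<and> linked (last xs) x)"
    using ex_left_maximal_ending_at_with_last left_maximal_ending_at_last by metis
  then show ?thesis
    unfolding left_maximal_ending_at_def left_maximal_def feasible_seq_singleton by auto
qed

lemma alive_sequences: "fst (alg_state Pi ip i) = {xs. left_maximal_ending_at Pi ip i xs}"
proof (induction i)
  case 0
  then show ?case
    by (simp add: left_maximal_ending_at_def)
next
  case (Suc i)
  have step: "fst (alg_state Pi ip (Suc i)) =
      {xs @ [ip (Suc i) p] | xs p. left_maximal_ending_at Pi ip i xs \<and> p \<in> Pi (Suc i) \<and>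
         linked (last xs) (ip (Suc i) p)} \<union>
      {[ip (Suc i) p] | p. p \<in> Pi (Suc i) \<and>
         \<not> (\<exists>xs. left_maximal_ending_at Pi ip i xs \<and> linked (last xs) (ip (Suc i) p))}"
    by (auto simp: alg_step_def Let_def Suc.IH)
  have nonempty: "left_maximal_ending_at Pi ip i xs \<Longrightarrow> xs \<noteq> []" for xs
    by (simp add: left_maximal_ending_at_def)
  show ?case
  proof (rule set_eqI)
    fix ys
    show "ys \<in> fst (alg_state Pi ip (Suc i)) \<longleftrightarrow> ys \<in> {ys. left_maximal_ending_at Pi ip (Suc i) ys}"
    proof (cases ys rule: rev_cases)
      case Nil
      then show ?thesis
        unfolding step by (simp add: left_maximal_ending_at_def)
    next
      case (snoc xs x)
      then show ?thesis
        unfolding step using nonempty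
        by (cases "xs = []") (auto simp: left_maximal_ending_at_singleton left_maximal_ending_at_snoc)
    qed
  qed
qed

lemma finished_sequences: "snd (alg_state Pi ip i) =
    {xs. \<exists>k<i. left_maximal_ending_at Pi ip k xs \<and> \<not> (\<exists>p\<in>Pi (Suc k). linked (last xs) (ip (Suc k) p))}"
proof (induction i)
  case 0
  then show ?case by simp
next
  case (Suc i)
  have "snd (alg_state Pi ip (Suc i)) = snd (alg_state Pi ip i) \<union>
      {xs \<in> fst (alg_state Pi ip i). \<not> (\<exists>p\<in>Pi (Suc i). linked (last xs) (ip (Suc i) p))}"
    by (auto simp: alg_step_def Let_def)
  then show ?case
    unfolding Suc.IH alive_sequences by (auto simp: less_Suc_eq)
qed

lemma maximal_sequence_iff:
  "maximal_sequence n Pi ip a xs \<longleftrightarrow> xs \<noteq> [] \<and> 1 \<le> a \<and> a + length xs - 1 \<le> n \<and>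
     feasible_seq Pi ip a xs \<and> left_maximal Pi ip a xs \<and>
     \<not> (a + length xs - 1 < n \<and> (\<exists>p\<in>Pi (a + length xs). linked (last xs) (ip (a + length xs) p)))"
  unfolding maximal_sequence_def feasible_seq_def left_maximal_def by blast

lemma maximal_sequence_iff_left_maximal_ending_at:
  "maximal_sequence n Pi ip a xs \<longleftrightarrow> (\<exists>i\<le>n. left_maximal_ending_at Pi ip i xs \<and>
     a = Suc i - length xs \<and> (i < n \<longrightarrow> \<not> (\<exists>p\<in>Pi (Suc i). linked (last xs) (ip (Suc i) p))))"
    (is "_ \<longleftrightarrow> (\<exists>i\<le>n. ?ends_at i)")
proof
  assume max: "maximal_sequence n Pi ip a xs"
  define i where "i = a + length xs - 1"
  have "xs \<noteq> []" and "1 \<le> a"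
    using max by (simp_all add: maximal_sequence_iff)
  then have "a + length xs - 1 = i" and "a + length xs = Suc i" and "a = Suc i - length xs"
    and "length xs \<le> i"
    unfolding i_def by (cases xs; auto)+
  with max have "i \<le> n" and "?ends_at i"
    unfolding maximal_sequence_iff left_maximal_ending_at_def by simp_all
  then show "\<exists>i\<le>n. ?ends_at i"
    by blast
next
  assume "\<exists>i\<le>n. ?ends_at i"
  then obtain i where "i \<le> n" and ends: "?ends_at i"
    by blast
  then have "length xs \<le> i"
    by (simp add: left_maximal_ending_at_def)
  with ends have "1 \<le> a" and "a + length xs = Suc i" and "a + length xs - 1 = i"
    by simp_all
  with \<open>i \<le> n\<close> ends show "maximal_sequence n Pi ip a xs"
    unfolding maximal_sequence_iff left_maximal_ending_at_def by (cases "i < n") auto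
qed

theorem proposition17:
  fixes F :: "'f::{field,finite} itself"
    and K :: "'v::linorder set set" and N :: "'v set set" and n :: nat
    and V :: "nat \<Rightarrow> 'v set set set" and S :: "nat \<Rightarrow> 'v set set"
    and Pi :: "nat \<Rightarrow> 'p set" and le :: "nat \<Rightarrow> 'p \<Rightarrow> 'p \<Rightarrow> bool"
    and M :: "nat \<Rightarrow> 'p \<Rightarrow> 'v set set"
    and ip :: "nat \<Rightarrow> 'p \<Rightarrow> 'v set set \<times> 'v set set"
  assumes "simplicial_complex K"
    and "closed_set K N"
    and "\<And>i. 1 \<le> i \<Longrightarrow> i \<le> n \<Longrightarrow> multivector_field K (V i)"
    and "\<And>i. 1 \<le> i \<Longrightarrow> i \<le> n \<Longrightarrow> isolated_by F K (V i) N (S i)"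
    and "\<And>i. 1 \<le> i \<Longrightarrow> i \<le> n \<Longrightarrow> morse_decomposition F K (V i) N (S i) (Pi i) (le i) (M i)"
    and "\<And>i p. 1 \<le> i \<Longrightarrow> i \<le> n \<Longrightarrow> p \<in> Pi i \<Longrightarrow>
           index_pair F K (V i) N (M i p) (fst (ip i p)) (snd (ip i p))"
  shows "find_conley_morse_filtrations n Pi ip = conley_morse_filtrations n Pi ip"
proof -
  have "snd (alg_state Pi ip n) \<union> fst (alg_state Pi ip n) = {xs. \<exists>a. maximal_sequence n Pi ip a xs}"
    unfolding finished_sequences alive_sequences maximal_sequence_iff_left_maximal_ending_at
    by (auto simp: le_less)
  then show ?thesis
    unfolding find_conley_morse_filtrations_def conley_morse_filtrations_def by blast
qed

end
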